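(* For every finite simple digraph $G$, ${\sf kw}(G) \leq {\sf circ}(G) + 1$, where ${\sf kw}(G)$ is the Kelly-width of $G$ and ${\sf circ}(G)$ is its circumference.
   Context: All digraphs are finite and simple (no loops, no multiple arcs). The circumference ${\sf circ}(G)$ of a digraph $G$ is the length (number of arcs) of a longest simple directed cycle in $G$; if $G$ is acyclic (a DAG), ${\sf circ}(G)$ is defined to be $1$. For a DAG $T$ and distinct nodes $i,j$, write $i\prec j$ if there is a directed walk in $T$ from $i$ to $j$, and $i\preceq j$ if $i=j$ or $i\prec j$; a root is a node with no incoming arcs, and the children of $i$ are the heads of arcs with tail $i$. Given sets $W_i$ for nodes $i$, let $W_{\succeq j}=\bigcup_{k\succeq j}W_k$. For $W,X\subseteq V(G)$, $X$ guards $W$ if $W\cap X=\emptyset$ and for every arc $(u,v)$ of $G$ with $u\in W$ we have $v\in W\cup X$. A Kelly-decomposition of $G$ is a triple $(T,(W_i)_{i\in V(T)},(X_i)_{i\in V(T)})$ where $T$ is a DAG and all $W_i,X_i\subseteq V(G)$, such that: (1) $(W_i)_i$ is a partition of $V(G)$; (2) for every node $i$, $X_i$ guards $W_{\succeq i}$; (3) for every node $i$, the children of $i$ can be enumerated as $j_1,\dots,j_s$ so that for each $q$, $X_{j_q}\subseteq W_i\cup X_i\cup\bigcup_{p<q}W_{\succeq j_p}$, and the roots of $T$ can be enumerated as $r_1,r_2,\dots$ so that for each $q$, $X_{r_q}\subseteq\bigcup_{p<q}W_{\succeq r_p}$. Its width is $\max_i|W_i\cup X_i|$, and the Kelly-width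 ${\sf kw}(G)$ is the minimum width of a Kelly-decomposition of $G$. *)

theory Defs
  imports Main
begin

definition simple_digraph :: "'a set \<Rightarrow> ('a \<times> 'a) set \<Rightarrow> bool" where
  "simple_digraph V E \<longleftrightarrow> finite V \<and> E \<subseteq> V \<times> V \<and> (\<forall>v. (v, v) \<notin> E)"

text \<open>A simple directed cycle, as the (nonempty, repetition-free) list of its vertices;
  its length (number of arcs) is the length of the list.\<close>

definition is_dcycle :: "'a set \<Rightarrow> ('a \<times> 'a) set \<Rightarrow> 'a list \<Rightarrow> bool" where
  "is_dcycle V E c \<longleftrightarrow> c \<noteq> [] \<and> distinct c \<and> set c \<subseteq> V \<and>
     (\<forall>i < length c. (c ! i, c ! ((i + 1) mod length c)) \<in> E)"

definition circ :: "'a set \<Rightarrow> ('a \<times> 'a) set \<Rightarrow> nat" where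
  "circ V E = (if \<exists>c. is_dcycle V E c
               then Max {length c | c. is_dcycle V E c} else 1)"

definition guards :: "('a \<times> 'a) set \<Rightarrow> 'a set \<Rightarrow> 'a set \<Rightarrow> bool" where
  "guards E X W \<longleftrightarrow> W \<inter> X = {} \<and> (\<forall>(u, v) \<in> E. u \<in> W \<longrightarrow> v \<in> W \<union> X)"

definition Wsucc :: "nat set \<Rightarrow> (nat \<times> nat) set \<Rightarrow> (nat \<Rightarrow> 'a set) \<Rightarrow> nat \<Rightarrow> 'a set" where
  "Wsucc N A W j = \<Union> {W k | k. k \<in> N \<and> (j = k \<or> (j, k) \<in> A\<^sup>+)}"

definition kelly_decomposition ::
  "'a set \<Rightarrow> ('a \<times> 'a) set \<Rightarrow> nat set \<Rightarrow> (nat \<times> nat) set \<Rightarrow>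
     (nat \<Rightarrow> 'a set) \<Rightarrow> (nat \<Rightarrow> 'a set) \<Rightarrow> bool" where
  "kelly_decomposition V E N A W X \<longleftrightarrow>
     finite N \<and> A \<subseteq> N \<times> N \<and> acyclic A \<and>
     (\<forall>i \<in> N. W i \<subseteq> V \<and> X i \<subseteq> V) \<and>
     \<comment> \<open>(1) partition of V\<close>
     (\<Union>i \<in> N. W i) = V \<and> (\<forall>i \<in> N. \<forall>j \<in> N. i \<noteq> j \<longrightarrow> W i \<inter> W j = {}) \<and>
     \<comment> \<open>(2) guarding\<close>
     (\<forall>i \<in> N. guards E (X i) (Wsucc N A W i)) \<and>
     \<comment> \<open>(3) children ordering\<close>
     (\<forall>i \<in> N. \<exists>js. distinct js \<and> set js = {j. (i, j) \<in> A} \<and>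
        (\<forall>q < length js. X (js ! q) \<subseteq>
            W i \<union> X i \<union> (\<Union>p < q. Wsucc N A W (js ! p)))) \<and>
     \<comment> \<open>(3) roots ordering\<close>
     (\<exists>rs. distinct rs \<and> set rs = {r \<in> N. \<forall>i. (i, r) \<notin> A} \<and>
        (\<forall>q < length rs. X (rs ! q) \<subseteq> (\<Union>p < q. Wsucc N A W (rs ! p))))"

definition kelly_width_of :: "nat set \<Rightarrow> (nat \<Rightarrow> 'a set) \<Rightarrow> (nat \<Rightarrow> 'a set) \<Rightarrow> nat" where
  "kelly_width_of N W X = (if N = {} then 0 else Max ((\<lambda>i. card (W i \<union> X i)) ` N))"

definition kw :: "'a set \<Rightarrow> ('a \<times> 'a) set \<Rightarrow> nat" where
  "kw V E = (LEAST k. \<exists>N A W X. kelly_decomposition V E N A W X \<and> kelly_width_of N W X = k)"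

end

theory Submission
  imports Defs
begin

text \<open>Number the vertices by a depth-first-search post-order rk. For a vertex v let R(v) be the set
  of vertices reachable from v through vertices of rank at most rk v, and F(v) the set of
  out-neighbours of R(v) of rank larger than rk v. One node per vertex v, with bag {v} and guard F(v),
  and an arc from v to every other vertex of R(v), form a Kelly-decomposition of width
  max |F(v)| + 1. Since rk is a DFS post-order, F(v) lies on the DFS stack at the moment v is
  finished, i.e. on a path ending in v through vertices of rank at least rk v. Closing this path
  from its first vertex in F(v) back through R(v) gives a directed cycle containing F(v), so
  |F(v)| is at most the circumference.\<close>

abbreviation walk :: "('a \<times> 'a) set \<Rightarrow> 'a list \<Rightarrow> bool" where
  "walk E \<equiv> successively (\<lambda>x y. (x, y) \<in> E)"

lemma rtrancl_imp_distinct_walk: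
  assumes "(v, x) \<in> r\<^sup>*"
  shows "\<exists>q. walk r q \<and> q \<noteq> [] \<and> hd q = v \<and> last q = x \<and> distinct q"
  using assms
proof (induction rule: converse_rtrancl_induct)
  case base
  show ?case by (intro exI[of _ "[x]"]) simp
next
  case (step y z)
  then obtain q where q: "walk r q" "q \<noteq> []" "hd q = z" "last q = x" "distinct q" by blast
  show ?case
  proof (cases "y \<in> set q")
    case True
    then obtain k where k: "k < length q" "q ! k = y" by (auto simp: in_set_conv_nth)
    have "walk r (drop k q)"
      using q(1) by (simp add: successively_conv_nth)
    with q k show ?thesis
      by (intro exI[of _ "drop k q"]) (auto simp: hd_drop_conv_nth)
  next
    case False
    with q step show ?thesis
      by (intro exI[of _ "y # q"]) (auto simp: successively_Cons)
  qed
qed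

lemma walk_tl_subset_Range: "walk r q \<Longrightarrow> set (tl q) \<subseteq> Range r"
  by (induction "\<lambda>x y. (x, y) \<in> r" q rule: successively.induct) auto

lemma rtrancl_avoiding_closed:
  assumes "(v, x) \<in> r\<^sup>*" "x \<notin> R" and closed: "\<And>a b. (a, b) \<in> r \<Longrightarrow> a \<in> R \<Longrightarrow> b \<in> R"
  shows "v \<notin> R \<and> (v, x) \<in> (Restr r (- R))\<^sup>*"
  using assms(1,2)
proof (induction rule: rtrancl_induct)
  case (step a b)
  then have "a \<notin> R" using closed by blast
  with step show ?case by (blast intro: rtrancl_into_rtrancl)
qed simp

lemma rtrancl_avoiding_root:
  fixes r :: "('a \<times> 'a) set" and s :: 'a
  defines "R \<equiv> r\<^sup>* `` {s} - {s}"
  shows "R \<subseteq> (Restr r R)\<^sup>* `` (r `` {s} - {s})"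
proof
  fix u assume "u \<in> R"
  then have "(s, u) \<in> r\<^sup>*" "u \<noteq> s" by (auto simp: R_def)
  then show "u \<in> (Restr r R)\<^sup>* `` (r `` {s} - {s})"
  proof (induction rule: rtrancl_induct)
    case (step y z)
    have "z \<in> R" using step.hyps step.prems by (auto simp: R_def intro: rtrancl_into_rtrancl)
    show ?case
    proof (cases "y = s")
      case False
      then have "y \<in> R" using step.hyps(1) by (simp add: R_def)
      with \<open>z \<in> R\<close> step show ?thesis by (blast intro: rtrancl_into_rtrancl)
    qed (use step.hyps step.prems in blast)
  qed simp
qed

lemma closed_walk_is_dcycle:
  assumes "walk E c" "c \<noteq> []" "distinct c" "set c \<subseteq> V" "(last c, hd c) \<in> E"
  shows "is_dcycle V E c"
proof -
  have "(c ! i, c ! ((i + 1) mod length c)) \<in> E" if "i < length c" for i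
  proof (cases "Suc i < length c")
    case True
    then show ?thesis using successively_nth[OF assms(1)] by simp
  next
    case False
    with that have "i = length c - 1" "Suc i = length c" by simp_all
    then show ?thesis using assms(2,5) by (simp add: last_conv_nth hd_conv_nth)
  qed
  with assms(2-4) show ?thesis by (simp add: is_dcycle_def)
qed

lemma append_walks_is_dcycle:
  assumes "walk E p" "walk E (v # q)" "p \<noteq> []" "last p = v" "distinct p" "distinct (v # q)"
    "set p \<inter> set q = {}" "set p \<union> set q \<subseteq> V" "(last (v # q), hd p) \<in> E"
  shows "is_dcycle V E (p @ q)"
proof (rule closed_walk_is_dcycle)
  show "walk E (p @ q)" using assms(1-4) by (auto simp: successively_append_iff successively_Cons)
  show "(last (p @ q), hd (p @ q)) \<in> E" using assms(3,4,9) by (cases "q = []") auto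
qed (use assms(3,5-8) in auto)

lemma walk_suffix_from_first:
  assumes "walk E p" "distinct p" "F \<subseteq> set p" "F \<noteq> {}"
  obtains p' where "walk E p'" "distinct p'" "p' \<noteq> []" "hd p' \<in> F" "last p' = last p" "F \<subseteq> set p'"
    "set p' \<subseteq> set p"
proof
  let ?p' = "dropWhile (\<lambda>z. z \<notin> F) p"
  have "walk E (takeWhile (\<lambda>z. z \<notin> F) p @ ?p')" using assms(1) by simp
  then show "walk E ?p'" unfolding successively_append_iff by blast
  show "distinct ?p'" using assms(2) by simp
  have "set p = set (takeWhile (\<lambda>z. z \<notin> F) p) \<union> set ?p'" by (simp flip: set_append)
  then show "F \<subseteq> set ?p'" using assms(3) by (auto dest: set_takeWhileD)
  show "?p' \<noteq> []" using assms(3,4) by auto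
  then show "hd ?p' \<in> F" using hd_dropWhile[of "\<lambda>z. z \<notin> F" p] by simp
  show "last ?p' = last p" using assms(3,4) by (auto intro: dropWhile_last)
  show "set ?p' \<subseteq> set p" by (auto dest: set_dropWhileD)
qed

lemma length_le_circ:
  assumes "finite V" "is_dcycle V E c"
  shows "length c \<le> circ V E"
proof -
  have "{length c | c. is_dcycle V E c} \<subseteq> {..card V}"
    using assms(1) by (auto simp: is_dcycle_def) (metis card_mono distinct_card)
  then have "length c \<le> Max {length c | c. is_dcycle V E c}"
    using assms(2) by (intro Max_ge) (auto dest: finite_subset)
  with assms(2) show ?thesis by (auto simp: circ_def)
qed

lemma mem_UN_nth_before:
  fixes js :: "nat list"
  assumes "sorted_wrt (>) js" "q < length js" "j \<in> set js" "js ! q < j" "y \<in> f j"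
  shows "y \<in> (\<Union>p < q. f (js ! p))"
proof -
  obtain p where p: "p < length js" "js ! p = j" using assms(3) by (auto simp: in_set_conv_nth)
  have "p < q"
  proof (rule ccontr)
    assume "\<not> p < q"
    then have "js ! p \<le> js ! q"
      using sorted_wrt_nth_less[OF assms(1), of q p] p(1) by (cases "p = q") auto
    with p(2) assms(4) show False by simp
  qed
  with p assms(5) show ?thesis by blast
qed

lemma sorted_wrt_greater_rev_sorted_list_of_set: "sorted_wrt (>) (rev (sorted_list_of_set C))"
  by (simp add: sorted_wrt_rev strict_sorted_list_of_set)

definition sublevel :: "'a set \<Rightarrow> ('a \<Rightarrow> nat) \<Rightarrow> 'a \<Rightarrow> 'a set" where
  "sublevel U rk v = {u \<in> U. rk u \<le> rk v}"

definition low_reach :: "('a \<times> 'a) set \<Rightarrow> 'a set \<Rightarrow> ('a \<Rightarrow> nat) \<Rightarrow> 'a \<Rightarrow> 'a set" where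
  "low_reach E U rk v = (Restr E (sublevel U rk v))\<^sup>* `` {v}"

definition frontier :: "('a \<times> 'a) set \<Rightarrow> 'a set \<Rightarrow> ('a \<Rightarrow> nat) \<Rightarrow> 'a \<Rightarrow> 'a set" where
  "frontier E U rk v = {y \<in> U. rk v < rk y \<and> (\<exists>x \<in> low_reach E U rk v. (x, y) \<in> E)}"

lemma low_reach_refl: "v \<in> low_reach E U rk v"
  by (simp add: low_reach_def)

lemma low_reach_subset_sublevel:
  assumes "v \<in> U"
  shows "low_reach E U rk v \<subseteq> sublevel U rk v"
proof
  fix x assume "x \<in> low_reach E U rk v"
  then have "(v, x) \<in> (Restr E (sublevel U rk v))\<^sup>*" by (simp add: low_reach_def)
  then show "x \<in> sublevel U rk v"
    by (induction rule: rtrancl_induct) (use assms in \<open>auto simp: sublevel_def\<close>)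
qed

lemma low_reach_trans:
  assumes "v \<in> U" "x \<in> low_reach E U rk v"
  shows "low_reach E U rk x \<subseteq> low_reach E U rk v"
proof
  fix y assume "y \<in> low_reach E U rk x"
  have "rk x \<le> rk v" using low_reach_subset_sublevel[OF assms(1)] assms(2) by (auto simp: sublevel_def)
  then have "Restr E (sublevel U rk x) \<subseteq> Restr E (sublevel U rk v)" by (auto simp: sublevel_def)
  then have "(x, y) \<in> (Restr E (sublevel U rk v))\<^sup>*"
    using \<open>y \<in> low_reach E U rk x\<close> rtrancl_mono unfolding low_reach_def by blast
  moreover have "(v, x) \<in> (Restr E (sublevel U rk v))\<^sup>*" using assms(2) by (simp add: low_reach_def)
  ultimately show "y \<in> low_reach E U rk v" by (simp add: low_reach_def)
qed

lemma low_reach_step: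
  assumes "v \<in> U" "x \<in> low_reach E U rk v" "(x, y) \<in> E" "y \<in> sublevel U rk v"
  shows "y \<in> low_reach E U rk v"
proof -
  have "x \<in> sublevel U rk v" using low_reach_subset_sublevel[OF assms(1)] assms(2) by blast
  with assms(3,4) have "(x, y) \<in> Restr E (sublevel U rk v)" by blast
  with assms(2) show ?thesis unfolding low_reach_def by (simp add: rtrancl_into_rtrancl)
qed

lemma guards_low_reach:
  assumes "E \<subseteq> U \<times> U" "v \<in> U"
  shows "guards E (frontier E U rk v) (low_reach E U rk v)"
  unfolding guards_def
proof (intro conjI ballI)
  show "low_reach E U rk v \<inter> frontier E U rk v = {}"
    using low_reach_subset_sublevel[OF assms(2), of E rk] by (force simp: frontier_def sublevel_def)
  fix e assume "e \<in> E"
  then obtain x y where e: "e = (x, y)" and xy: "(x, y) \<in> E" by (cases e) blast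
  have "y \<in> U" using xy assms(1) by blast
  have "y \<in> low_reach E U rk v \<union> frontier E U rk v" if x: "x \<in> low_reach E U rk v"
  proof (cases "rk y \<le> rk v")
    case True
    with \<open>y \<in> U\<close> have "y \<in> sublevel U rk v" by (simp add: sublevel_def)
    then show ?thesis using low_reach_step[OF assms(2) x xy] by blast
  qed (use \<open>y \<in> U\<close> x xy in \<open>auto simp: frontier_def\<close>)
  then show "case e of (u, w) \<Rightarrow> u \<in> low_reach E U rk v \<longrightarrow> w \<in> low_reach E U rk v \<union> frontier E U rk v"
    by (simp add: e)
qed

lemma low_reach_eq_if_complement_above:
  assumes "R \<subseteq> U" "v \<in> R" "\<And>w. w \<in> U - R \<Longrightarrow> rk v < rk w"
  shows "low_reach E U rk v = low_reach E R rk v"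
proof -
  have "u \<in> R" if "u \<in> U" "rk u \<le> rk v" for u
    using assms(3)[of u] that by (cases "u \<in> R") auto
  with assms(1) have "sublevel U rk v = sublevel R rk v"
    by (auto simp: sublevel_def)
  then show ?thesis by (simp add: low_reach_def)
qed

lemma frontier_order_cong:
  assumes "\<And>u w. u \<in> U \<Longrightarrow> w \<in> U \<Longrightarrow> rk u \<le> rk w \<longleftrightarrow> rk' u \<le> rk' w" "v \<in> U"
  shows "frontier E U rk v = frontier E U rk' v"
proof -
  have sub: "sublevel U rk v = sublevel U rk' v" using assms by (auto simp: sublevel_def)
  have "rk v < rk y \<longleftrightarrow> rk' v < rk' y" if "y \<in> U" for y
    using assms(1)[OF that assms(2)] by (simp add: not_le[symmetric])
  then show ?thesis unfolding frontier_def low_reach_def sub by blast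
qed

definition frontier_path :: "('a \<times> 'a) set \<Rightarrow> 'a set \<Rightarrow> ('a \<Rightarrow> nat) \<Rightarrow> 'a \<Rightarrow> 'a list \<Rightarrow> bool" where
  "frontier_path E U rk v p \<longleftrightarrow> walk E p \<and> p \<noteq> [] \<and> last p = v \<and> distinct p \<and> set p \<subseteq> U \<and>
     (\<forall>z \<in> set p. rk v \<le> rk z) \<and> frontier E U rk v \<subseteq> set p"

lemma frontier_path_order_cong:
  assumes "\<And>u w. u \<in> U \<Longrightarrow> w \<in> U \<Longrightarrow> rk u \<le> rk w \<longleftrightarrow> rk' u \<le> rk' w" "v \<in> U"
  shows "frontier_path E U rk v p \<longleftrightarrow> frontier_path E U rk' v p"
proof -
  have "(\<forall>z \<in> set p. rk v \<le> rk z) \<longleftrightarrow> (\<forall>z \<in> set p. rk' v \<le> rk' z)" if "set p \<subseteq> U"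
    using assms that by blast
  moreover have "frontier E U rk v = frontier E U rk' v"
    by (rule frontier_order_cong[OF assms])
  ultimately show ?thesis
    by (cases "set p \<subseteq> U") (simp_all add: frontier_path_def)
qed

lemma frontier_card_le_circ:
  assumes "finite V" "inj_on rk V" "v \<in> V" "frontier_path E V rk v p"
  shows "card (frontier E V rk v) \<le> circ V E"
proof (cases "frontier E V rk v = {}")
  case False
  let ?F = "frontier E V rk v" and ?L = "sublevel V rk v"
  have p: "walk E p" "last p = v" "distinct p" "set p \<subseteq> V" "\<forall>z \<in> set p. rk v \<le> rk z" "?F \<subseteq> set p"
    using assms(4) by (auto simp: frontier_path_def)
  obtain p' where p': "walk E p'" "distinct p'" "p' \<noteq> []" "hd p' \<in> ?F" "last p' = v" "?F \<subseteq> set p'"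
    "set p' \<subseteq> set p"
    using walk_suffix_from_first[OF p(1,3,6) False] p(2) by metis
  then obtain x where x: "x \<in> low_reach E V rk v" "(x, hd p') \<in> E" by (auto simp: frontier_def)
  then have "(v, x) \<in> (Restr E ?L)\<^sup>*" by (simp add: low_reach_def)
  from rtrancl_imp_distinct_walk[OF this] obtain q
    where q: "walk (Restr E ?L) q" "q \<noteq> []" "hd q = v" "last q = x" "distinct q" by blast
  then obtain q' where q': "q = v # q'" by (cases q) auto
  have q'_L: "set q' \<subseteq> ?L" using walk_tl_subset_Range[OF q(1)] by (auto simp: q')
  have "set p' \<inter> set q' = {}"
  proof (intro equals0I)
    fix z assume z: "z \<in> set p' \<inter> set q'"
    then have "rk v \<le> rk z" "z \<in> V" using p p'(7) by auto
    moreover have "z \<in> ?L" using z q'_L by blast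
    ultimately have "z = v" using assms(2,3) by (auto simp: sublevel_def inj_on_def)
    then show False using z q(5) by (simp add: q')
  qed
  moreover have "walk E (v # q')" using q(1) unfolding q' by (rule successively_mono) blast
  moreover have "set p' \<union> set q' \<subseteq> V" using p(4) p'(7) q'_L by (auto simp: sublevel_def)
  ultimately have "is_dcycle V E (p' @ q')"
    using p' q(4,5) x(2) unfolding q' by (intro append_walks_is_dcycle) auto
  have "card ?F \<le> card (set p')" using p'(6) by (simp add: card_mono)
  also have "\<dots> \<le> length (p' @ q')" by (simp add: card_length trans_le_add1)
  also have "\<dots> \<le> circ V E" using length_le_circ[OF assms(1)] \<open>is_dcycle V E (p' @ q')\<close> .
  finally show ?thesis .
qed simp

text \<open>rk numbers U as a DFS post-order whose search trees are rooted in S: the path p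
  witnessing frontier_path is the DFS stack when v is finished.\<close>

definition dfs_ranking :: "('a \<times> 'a) set \<Rightarrow> 'a set \<Rightarrow> 'a set \<Rightarrow> ('a \<Rightarrow> nat) \<Rightarrow> bool" where
  "dfs_ranking E U S rk \<longleftrightarrow> inj_on rk U \<and> rk ` U \<subseteq> {..<card U} \<and>
     (\<forall>v \<in> U. \<exists>p. hd p \<in> S \<and> frontier_path E U rk v p)"

lemma frontier_path_insert_top:
  assumes "s \<notin> R" "v \<in> R" "\<And>u. u \<in> R \<Longrightarrow> rk u < rk s" "frontier_path E R rk v p" "(s, hd p) \<in> E"
  shows "frontier_path E (insert s R) rk v (s # p)"
proof -
  have p: "walk E p" "p \<noteq> []" "last p = v" "distinct p" "set p \<subseteq> R" "\<forall>z \<in> set p. rk v \<le> rk z"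
    "frontier E R rk v \<subseteq> set p"
    using assms(4) by (simp_all add: frontier_path_def)
  have "low_reach E (insert s R) rk v = low_reach E R rk v"
    using assms(1-3) by (intro low_reach_eq_if_complement_above) auto
  then have "frontier E (insert s R) rk v \<subseteq> insert s (frontier E R rk v)"
    by (auto simp: frontier_def)
  moreover have "rk v \<le> rk s" using assms(2,3) by (simp add: less_imp_le)
  ultimately show ?thesis
    using p assms(1,5) by (auto simp: frontier_path_def successively_Cons)
qed

lemma dfs_ranking_insert_top:
  assumes "finite R" "s \<notin> R" "dfs_ranking E R S rk" "S \<subseteq> E `` {s}"
  shows "dfs_ranking E (insert s R) {s} (rk(s := card R))"
proof -
  let ?rk = "rk(s := card R)"
  have rk: "inj_on rk R" "rk ` R \<subseteq> {..<card R}" "\<forall>v \<in> R. \<exists>p. hd p \<in> S \<and> frontier_path E R rk v p"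
    using assms(3) by (simp_all add: dfs_ranking_def)
  have below: "?rk u < ?rk s" if "u \<in> R" for u
    using that rk(2) assms(2) by auto
  have "inj_on ?rk R"
    using rk(1) assms(2) by (metis fun_upd_other inj_on_cong)
  moreover have "?rk s \<notin> ?rk ` R"
    using below by (metis imageE less_irrefl)
  ultimately have "inj_on ?rk (insert s R)"
    using assms(2) by (simp add: inj_on_insert)
  moreover have "?rk ` insert s R \<subseteq> {..<card (insert s R)}"
    using rk(2) assms(1,2) by auto
  moreover have "\<exists>p. hd p \<in> {s} \<and> frontier_path E (insert s R) ?rk v p" if v: "v \<in> insert s R" for v
  proof (cases "v = s")
    case True
    have "?rk y \<le> ?rk s" if "y \<in> insert s R" for y
      using below[of y] that by (cases "y = s") auto
    then have "frontier E (insert s R) ?rk s = {}"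
      unfolding frontier_def using leD by blast
    with True show ?thesis by (intro exI[of _ "[s]"]) (simp add: frontier_path_def)
  next
    case False
    with v rk(3) obtain p where p: "hd p \<in> S" "frontier_path E R rk v p" by auto
    have "frontier_path E R ?rk v p \<longleftrightarrow> frontier_path E R rk v p"
      using False v assms(2) by (intro frontier_path_order_cong) auto
    with p(2) have "frontier_path E R ?rk v p" by blast
    then have "frontier_path E (insert s R) ?rk v (s # p)"
      using False v below p(1) assms(2,4) by (intro frontier_path_insert_top) auto
    then show ?thesis by (intro exI[of _ "s # p"]) simp
  qed
  ultimately show ?thesis by (simp add: dfs_ranking_def)
qed

lemma frontier_path_lift_closed:
  assumes "R \<subseteq> U" "E `` R \<inter> U \<subseteq> R" "\<And>u w. u \<in> R \<Longrightarrow> w \<in> U - R \<Longrightarrow> rk u < rk w"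
    "v \<in> R" "frontier_path E R rk v p"
  shows "frontier_path E U rk v p"
proof -
  have low: "low_reach E U rk v = low_reach E R rk v"
    using assms(1,3,4) by (intro low_reach_eq_if_complement_above) auto
  have "low_reach E R rk v \<subseteq> R"
    using low_reach_subset_sublevel[OF assms(4)] by (auto simp: sublevel_def)
  then have "frontier E U rk v \<subseteq> frontier E R rk v"
    using assms(2) by (auto simp: frontier_def low)
  then show ?thesis using assms(1,5) by (auto simp: frontier_path_def)
qed

lemma frontier_path_lift_complement:
  assumes "E `` R \<inter> U \<subseteq> R" "\<And>u w. u \<in> R \<Longrightarrow> w \<in> U - R \<Longrightarrow> rk u < rk w"
    "v \<in> U - R" "frontier_path E (U - R) rk v p"
  shows "frontier_path E U rk v p"
proof -
  have "y \<in> frontier E (U - R) rk v" if y: "y \<in> frontier E U rk v" for y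
  proof -
    let ?r = "Restr E (sublevel U rk v)"
    obtain x where x: "x \<in> low_reach E U rk v" "(x, y) \<in> E" and yU: "y \<in> U" "rk v < rk y"
      using y by (auto simp: frontier_def)
    have "y \<notin> R" using assms(2,3) yU(2) by fastforce
    then have "x \<notin> R" using assms(1) x(2) yU(1) by blast
    moreover have "(v, x) \<in> ?r\<^sup>*" using x(1) by (simp add: low_reach_def)
    moreover have "b \<in> R" if "(a, b) \<in> ?r" "a \<in> R" for a b
      using assms(1) that by (auto simp: sublevel_def)
    ultimately have "(v, x) \<in> (Restr ?r (- R))\<^sup>*" by (blast dest: rtrancl_avoiding_closed)
    moreover have "Restr ?r (- R) \<subseteq> Restr E (sublevel (U - R) rk v)" by (auto simp: sublevel_def)
    ultimately have "x \<in> low_reach E (U - R) rk v"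
      unfolding low_reach_def using rtrancl_mono by blast
    with x(2) yU \<open>y \<notin> R\<close> show ?thesis by (auto simp: frontier_def)
  qed
  then show ?thesis using assms(4) by (auto simp: frontier_path_def)
qed

lemma concat_ranking_inj_bounded:
  assumes "finite U" "R \<subseteq> U" "inj_on rk1 R" "rk1 ` R \<subseteq> {..<card R}"
    "inj_on rk2 (U - R)" "rk2 ` (U - R) \<subseteq> {..<card (U - R)}"
  defines "rk \<equiv> \<lambda>u. if u \<in> R then rk1 u else card R + rk2 u"
  shows "inj_on rk U" "rk ` U \<subseteq> {..<card U}"
proof -
  have card_U: "card U = card R + card (U - R)"
    using assms(1,2) by (simp add: card_Diff_subset card_mono finite_subset)
  show "inj_on rk U"
  proof (rule inj_onI)
    fix u w assume uw: "u \<in> U" "w \<in> U" "rk u = rk w"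
    show "u = w"
    proof (cases "u \<in> R"; cases "w \<in> R")
      assume "u \<in> R" "w \<in> R"
      with uw(3) show ?thesis using assms(3) by (simp add: rk_def inj_on_eq_iff)
    next
      assume "u \<notin> R" "w \<notin> R"
      with uw show ?thesis using assms(5) by (simp add: rk_def inj_on_eq_iff)
    qed (use assms(4) uw in \<open>fastforce simp: rk_def\<close>)+
  qed
  show "rk ` U \<subseteq> {..<card U}"
  proof
    fix k assume "k \<in> rk ` U"
    then obtain u where "u \<in> U" "k = rk u" by blast
    then show "k \<in> {..<card U}" using assms(4,6) card_U by (cases "u \<in> R") (auto simp: rk_def)
  qed
qed

lemma dfs_ranking_closed_union:
  assumes "finite U" "R \<subseteq> U" "E `` R \<inter> U \<subseteq> R"
    and "dfs_ranking E R S1 rk1" "dfs_ranking E (U - R) S2 rk2" "S1 \<union> S2 \<subseteq> S"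
  shows "dfs_ranking E U S (\<lambda>u. if u \<in> R then rk1 u else card R + rk2 u)"
proof -
  define rk where "rk = (\<lambda>u. if u \<in> R then rk1 u else card R + rk2 u)"
  have rk1: "inj_on rk1 R" "rk1 ` R \<subseteq> {..<card R}" "\<forall>v \<in> R. \<exists>p. hd p \<in> S1 \<and> frontier_path E R rk1 v p"
    using assms(4) by (simp_all add: dfs_ranking_def)
  have rk2: "inj_on rk2 (U - R)" "rk2 ` (U - R) \<subseteq> {..<card (U - R)}"
    "\<forall>v \<in> U - R. \<exists>p. hd p \<in> S2 \<and> frontier_path E (U - R) rk2 v p"
    using assms(5) by (simp_all add: dfs_ranking_def)
  have above: "rk u < rk w" if "u \<in> R" "w \<in> U - R" for u w
    using that rk1(2) by (auto simp: rk_def)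
  have "\<exists>p. hd p \<in> S \<and> frontier_path E U rk v p" if v: "v \<in> U" for v
  proof (cases "v \<in> R")
    case True
    with rk1(3) obtain p where p: "hd p \<in> S1" "frontier_path E R rk1 v p" by blast
    have "frontier_path E R rk v p \<longleftrightarrow> frontier_path E R rk1 v p"
      using True by (intro frontier_path_order_cong) (auto simp: rk_def)
    with p(2) have "frontier_path E U rk v p"
      using frontier_path_lift_closed[where rk = rk, OF assms(2,3) above True] by blast
    with p(1) assms(6) show ?thesis by blast
  next
    case False
    with v rk2(3) obtain p where p: "hd p \<in> S2" "frontier_path E (U - R) rk2 v p" by blast
    have "frontier_path E (U - R) rk v p \<longleftrightarrow> frontier_path E (U - R) rk2 v p"
      using False v by (intro frontier_path_order_cong) (auto simp: rk_def)
    with p(2) have "frontier_path E U rk v p"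
      using frontier_path_lift_complement[where rk = rk, OF assms(3) above] False v by blast
    with p(1) assms(6) show ?thesis by blast
  qed
  with concat_ranking_inj_bounded[OF assms(1,2) rk1(1,2) rk2(1,2)] show ?thesis
    unfolding dfs_ranking_def rk_def by blast
qed

lemma reachable_in_complement_of_closed:
  assumes "U \<subseteq> (Restr E U)\<^sup>* `` S" "E `` R \<inter> U \<subseteq> R"
  shows "U - R \<subseteq> (Restr E (U - R))\<^sup>* `` (S - R)"
proof
  fix u assume u: "u \<in> U - R"
  with assms(1) obtain s where s: "s \<in> S" "(s, u) \<in> (Restr E U)\<^sup>*" by blast
  have "b \<in> R" if "(a, b) \<in> Restr E U" "a \<in> R" for a b
    using assms(2) that by blast
  with s(2) u have "s \<notin> R" "(s, u) \<in> (Restr (Restr E U) (- R))\<^sup>*"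
    using rtrancl_avoiding_closed[of s u "Restr E U" R] by blast+
  moreover have "Restr (Restr E U) (- R) = Restr E (U - R)" by blast
  ultimately show "u \<in> (Restr E (U - R))\<^sup>* `` (S - R)" using s(1) by auto
qed

lemma reachable_avoiding_root:
  fixes E :: "('a \<times> 'a) set" and U :: "'a set" and s :: 'a
  defines "R' \<equiv> (Restr E U)\<^sup>* `` {s} - {s}"
  shows "R' \<subseteq> (Restr E R')\<^sup>* `` (E `` {s} \<inter> R')"
proof -
  have "R' \<subseteq> (Restr (Restr E U) R')\<^sup>* `` (Restr E U `` {s} - {s})"
    using rtrancl_avoiding_root[of "Restr E U" s] unfolding R'_def .
  moreover have "Restr (Restr E U) R' = Restr E R'"
    unfolding R'_def by (blast elim: rtranclE)
  moreover have "Restr E U `` {s} - {s} \<subseteq> E `` {s} \<inter> R'"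
    unfolding R'_def by blast
  ultimately show ?thesis using Image_mono[OF order_refl] by (metis subset_trans)
qed

lemma dfs_ranking_exists:
  assumes "finite U" "S \<subseteq> U" "U \<subseteq> (Restr E U)\<^sup>* `` S"
  shows "\<exists>rk. dfs_ranking E U S rk"
  using assms
proof (induction "card U" arbitrary: U S rule: less_induct)
  case less
  show ?case
  proof (cases "U = {}")
    case True
    then have "dfs_ranking E U S (\<lambda>_. 0)" by (simp add: dfs_ranking_def)
    then show ?thesis by blast
  next
    case False
    with less.prems(3) obtain s where s: "s \<in> S" by blast
    \<comment> \<open>Search from s: the rest of its reach R first (from the successors of s), then s, then U - R.\<close>
    define R where "R = (Restr E U)\<^sup>* `` {s}"
    define R' where "R' = R - {s}"
    have "s \<in> U" using s less.prems(2) by blast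
    then have "R \<subseteq> U" by (auto simp: R_def elim: rtranclE)
    have "s \<in> R" by (simp add: R_def)
    have "finite R" using \<open>R \<subseteq> U\<close> less.prems(1) by (rule finite_subset)
    have closed: "E `` R \<inter> U \<subseteq> R"
      using \<open>R \<subseteq> U\<close> by (auto simp: R_def intro: rtrancl_into_rtrancl)
    have "card R' < card U"
      using card_Diff1_less[OF \<open>finite R\<close> \<open>s \<in> R\<close>] card_mono[OF less.prems(1) \<open>R \<subseteq> U\<close>]
      unfolding R'_def by linarith
    have "finite R'" using \<open>finite R\<close> by (simp add: R'_def)
    have "s \<notin> R'" by (simp add: R'_def)
    have reach_R': "R' \<subseteq> (Restr E R')\<^sup>* `` (E `` {s} \<inter> R')"
      unfolding R'_def R_def by (rule reachable_avoiding_root)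
    obtain rk1 where rk1: "dfs_ranking E R' (E `` {s} \<inter> R') rk1"
      using less.hyps[OF \<open>card R' < card U\<close> \<open>finite R'\<close> Int_lower2 reach_R'] by blast
    have "card (U - R) < card U"
      using \<open>s \<in> R\<close> \<open>s \<in> U\<close> less.prems(1) by (intro psubset_card_mono) auto
    moreover have "finite (U - R)" "S - R \<subseteq> U - R" using less.prems(1,2) by auto
    ultimately obtain rk2 where rk2: "dfs_ranking E (U - R) (S - R) rk2"
      using less.hyps reachable_in_complement_of_closed[OF less.prems(3) closed] by blast
    have "dfs_ranking E (insert s R') {s} (rk1(s := card R'))"
      using dfs_ranking_insert_top[OF \<open>finite R'\<close> \<open>s \<notin> R'\<close> rk1 Int_lower1] .
    moreover have "insert s R' = R" using \<open>s \<in> R\<close> by (auto simp: R'_def)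
    ultimately have "dfs_ranking E R {s} (rk1(s := card R'))" by simp
    then show ?thesis
      using dfs_ranking_closed_union[OF less.prems(1) \<open>R \<subseteq> U\<close> closed _ rk2] s by blast
  qed
qed

locale ranked_digraph =
  fixes V :: "'a set" and E :: "('a \<times> 'a) set" and rk :: "'a \<Rightarrow> nat"
  assumes finite_V: "finite V" and arcs_in_V: "E \<subseteq> V \<times> V" and inj_rk: "inj_on rk V"
begin

definition nodes :: "nat set" where
  "nodes = rk ` V"

definition bag :: "nat \<Rightarrow> 'a set" where
  "bag i = {v \<in> V. rk v = i}"

definition guard :: "nat \<Rightarrow> 'a set" where
  "guard i = (\<Union>v \<in> bag i. frontier E V rk v)"

definition node_arcs :: "(nat \<times> nat) set" where
  "node_arcs = {(rk v, rk x) | v x. v \<in> V \<and> x \<in> low_reach E V rk v - {v}}"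

lemma bag_rank: "v \<in> V \<Longrightarrow> bag (rk v) = {v}"
  using inj_rk by (auto simp: bag_def inj_on_eq_iff)

lemma guard_rank: "v \<in> V \<Longrightarrow> guard (rk v) = frontier E V rk v"
  by (simp add: guard_def bag_rank)

lemma low_reach_subset_V: "v \<in> V \<Longrightarrow> low_reach E V rk v \<subseteq> V"
  using low_reach_subset_sublevel[of v V E rk] by (auto simp: sublevel_def)

lemma low_reach_rank_less:
  assumes "v \<in> V" "x \<in> low_reach E V rk v" "x \<noteq> v"
  shows "rk x < rk v"
proof -
  have "x \<in> V" "rk x \<le> rk v"
    using low_reach_subset_sublevel[OF assms(1)] assms(2) by (auto simp: sublevel_def)
  with assms(1,3) inj_rk show ?thesis by (auto simp: inj_on_eq_iff order.order_iff_strict)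
qed

lemma node_arcsE:
  assumes "(i, j) \<in> node_arcs"
  obtains v x where "i = rk v" "j = rk x" "v \<in> V" "x \<in> low_reach E V rk v" "x \<noteq> v"
  using assms by (auto simp: node_arcs_def)

lemma node_arcs_iff:
  assumes "v \<in> V" "x \<in> V"
  shows "(rk v, rk x) \<in> node_arcs \<longleftrightarrow> x \<in> low_reach E V rk v \<and> x \<noteq> v"
proof
  assume "(rk v, rk x) \<in> node_arcs"
  then obtain v' x' where "rk v = rk v'" "rk x = rk x'" "v' \<in> V" "x' \<in> low_reach E V rk v'" "x' \<noteq> v'"
    by (rule node_arcsE)
  moreover have "x' \<in> V" using low_reach_subset_V[OF \<open>v' \<in> V\<close>] \<open>x' \<in> low_reach E V rk v'\<close> by blast
  ultimately show "x \<in> low_reach E V rk v \<and> x \<noteq> v"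
    using assms inj_rk by (auto simp: inj_on_eq_iff)
qed (use assms in \<open>auto simp: node_arcs_def\<close>)

lemma node_arcs_subset_nodes: "node_arcs \<subseteq> nodes \<times> nodes"
  using low_reach_subset_V by (fastforce simp: node_arcs_def nodes_def)

lemma trans_node_arcs: "trans node_arcs"
proof (rule transI)
  fix i j k assume ij: "(i, j) \<in> node_arcs" and jk: "(j, k) \<in> node_arcs"
  obtain v x where vx: "i = rk v" "j = rk x" "v \<in> V" "x \<in> low_reach E V rk v" "x \<noteq> v"
    using ij by (rule node_arcsE)
  obtain x' z where xz: "j = rk x'" "k = rk z" "x' \<in> V" "z \<in> low_reach E V rk x'" "z \<noteq> x'"
    using jk by (rule node_arcsE)
  have "x \<in> V" using low_reach_subset_V[OF vx(3)] vx(4) by blast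
  with xz(1,3) vx(2) inj_rk have "x' = x" by (simp add: inj_on_eq_iff)
  with xz(4) have z: "z \<in> low_reach E V rk v" using low_reach_trans[OF vx(3,4)] by blast
  have "rk z < rk x" using low_reach_rank_less[OF \<open>x \<in> V\<close>] xz(4,5) \<open>x' = x\<close> by blast
  moreover have "rk x < rk v" using low_reach_rank_less[OF vx(3,4,5)] .
  ultimately have "z \<noteq> v" by auto
  with z vx(1,3) xz(2) show "(i, k) \<in> node_arcs" by (auto simp: node_arcs_def)
qed

lemma acyclic_node_arcs: "acyclic node_arcs"
proof -
  have "(i, i) \<notin> node_arcs" for i
    using low_reach_rank_less by (metis less_irrefl node_arcsE)
  then show ?thesis using trans_node_arcs by (simp add: acyclic_def trancl_id)
qed

lemma Wsucc_rank:
  assumes "v \<in> V"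
  shows "Wsucc nodes node_arcs bag (rk v) = low_reach E V rk v"
proof (intro equalityI subsetI)
  fix y assume "y \<in> Wsucc nodes node_arcs bag (rk v)"
  then obtain k where "k \<in> nodes" "rk v = k \<or> (rk v, k) \<in> node_arcs" "y \<in> bag k"
    by (auto simp: Wsucc_def trancl_id[OF trans_node_arcs])
  then have "y \<in> V" "rk v = rk y \<or> (rk v, rk y) \<in> node_arcs" by (auto simp: bag_def)
  then show "y \<in> low_reach E V rk v"
    using assms inj_rk node_arcs_iff low_reach_refl by (metis inj_onD)
next
  fix y assume y: "y \<in> low_reach E V rk v"
  then have "y \<in> V" using low_reach_subset_V[OF assms] by blast
  then have "rk y \<in> nodes" "y \<in> bag (rk y)" by (auto simp: nodes_def bag_def)
  moreover have "rk v = rk y \<or> (rk v, rk y) \<in> node_arcs"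
    using y assms \<open>y \<in> V\<close> node_arcs_iff by blast
  ultimately show "y \<in> Wsucc nodes node_arcs bag (rk v)"
    unfolding Wsucc_def trancl_id[OF trans_node_arcs] by blast
qed


lemma children_enumeration:
  assumes "i \<in> nodes"
  shows "\<exists>js. distinct js \<and> set js = {j. (i, j) \<in> node_arcs} \<and>
    (\<forall>q < length js. guard (js ! q) \<subseteq> bag i \<union> guard i \<union> (\<Union>p < q. Wsucc nodes node_arcs bag (js ! p)))"
proof -
  let ?C = "{j. (i, j) \<in> node_arcs}"
  define js where "js = rev (sorted_list_of_set ?C)"
  obtain v where v: "v \<in> V" "i = rk v" using assms by (auto simp: nodes_def)
  have "finite ?C"
    using node_arcs_subset_nodes finite_V by (auto simp: nodes_def intro: finite_subset)
  then have js: "distinct js" "set js = ?C" "sorted_wrt (>) js"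
    by (simp_all add: js_def sorted_wrt_greater_rev_sorted_list_of_set)
  have "guard (js ! q) \<subseteq> bag i \<union> guard i \<union> (\<Union>p < q. Wsucc nodes node_arcs bag (js ! p))"
    if q: "q < length js" for q
  proof
    fix y assume y_guard: "y \<in> guard (js ! q)"
    have "(i, js ! q) \<in> node_arcs" using js(2) q nth_mem by blast
    moreover from this obtain x where x: "js ! q = rk x" "x \<in> V"
      using node_arcs_subset_nodes by (auto simp: nodes_def)
    ultimately have x_low: "x \<in> low_reach E V rk v" "x \<noteq> v" using v node_arcs_iff by simp_all
    have "y \<in> frontier E V rk x" using y_guard x guard_rank by simp
    then obtain z where z: "z \<in> low_reach E V rk x" "(z, y) \<in> E" and "y \<in> V" "rk x < rk y"
      by (auto simp: frontier_def)
    have "z \<in> low_reach E V rk v" using low_reach_trans[OF v(1) x_low(1)] z(1) by blast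
    then have "y \<in> low_reach E V rk v \<union> frontier E V rk v"
      using guards_low_reach[OF arcs_in_V v(1)] z(2) unfolding guards_def by blast
    moreover have "y \<in> (\<Union>p < q. Wsucc nodes node_arcs bag (js ! p))"
      if "y \<in> low_reach E V rk v" "y \<noteq> v"
    proof (rule mem_UN_nth_before[OF js(3) q])
      have "(rk v, rk y) \<in> node_arcs" using node_arcs_iff[OF v(1) \<open>y \<in> V\<close>] that by blast
      then show "rk y \<in> set js" using js(2) v(2) by simp
      show "js ! q < rk y" using x(1) \<open>rk x < rk y\<close> by simp
      show "y \<in> Wsucc nodes node_arcs bag (rk y)" using Wsucc_rank[OF \<open>y \<in> V\<close>] low_reach_refl[of y E V rk] by simp
    qed
    ultimately show "y \<in> bag i \<union> guard i \<union> (\<Union>p < q. Wsucc nodes node_arcs bag (js ! p))"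
      using v(2) bag_rank[OF v(1)] guard_rank[OF v(1)] by blast
  qed
  with js(1,2) show ?thesis by blast
qed


lemma root_reachingE:
  assumes "y \<in> V"
  obtains u where "u \<in> V" "y \<in> low_reach E V rk u" "rk u \<in> {r \<in> nodes. \<forall>i. (i, r) \<notin> node_arcs}"
proof -
  let ?M = "{u \<in> V. y \<in> low_reach E V rk u}"
  have "finite ?M" using finite_V by simp
  have "y \<in> ?M" using assms low_reach_refl[of y E V rk] by simp
  then have "Max (rk ` ?M) \<in> rk ` ?M" using \<open>finite ?M\<close> by (intro Max_in) auto
  then obtain u where u_Max: "Max (rk ` ?M) = rk u" and u_M: "u \<in> ?M" by (rule imageE)
  have u: "u \<in> ?M" "\<And>w. w \<in> ?M \<Longrightarrow> rk w \<le> rk u"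
    using u_M Max_ge[OF finite_imageI[OF \<open>finite ?M\<close>] imageI] unfolding u_Max[symmetric] by simp_all
  have "u \<in> V" using u(1) by blast
  have "(i, rk u) \<notin> node_arcs" for i
  proof
    assume arc: "(i, rk u) \<in> node_arcs"
    then obtain w where w: "w \<in> V" "i = rk w" using node_arcs_subset_nodes by (auto simp: nodes_def)
    with arc have "u \<in> low_reach E V rk w" "u \<noteq> w" using node_arcs_iff[OF w(1) \<open>u \<in> V\<close>] by simp_all
    then have "rk u < rk w" using low_reach_rank_less[OF w(1)] by blast
    moreover have "w \<in> ?M" using low_reach_trans[OF w(1) \<open>u \<in> low_reach E V rk w\<close>] u(1) w(1) by blast
    ultimately show False using u(2) leD by blast
  qed
  moreover have "rk u \<in> nodes" using \<open>u \<in> V\<close> by (simp add: nodes_def)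
  ultimately show ?thesis using that u(1) by blast
qed


lemma roots_enumeration:
  "\<exists>rs. distinct rs \<and> set rs = {r \<in> nodes. \<forall>i. (i, r) \<notin> node_arcs} \<and>
    (\<forall>q < length rs. guard (rs ! q) \<subseteq> (\<Union>p < q. Wsucc nodes node_arcs bag (rs ! p)))"
proof -
  let ?C = "{r \<in> nodes. \<forall>i. (i, r) \<notin> node_arcs}"
  define rs where "rs = rev (sorted_list_of_set ?C)"
  have "finite ?C" using finite_V by (simp add: nodes_def)
  then have rs: "distinct rs" "set rs = ?C" "sorted_wrt (>) rs"
    by (simp_all add: rs_def sorted_wrt_greater_rev_sorted_list_of_set)
  have "guard (rs ! q) \<subseteq> (\<Union>p < q. Wsucc nodes node_arcs bag (rs ! p))" if q: "q < length rs" for q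
  proof
    fix y assume y_guard: "y \<in> guard (rs ! q)"
    have "rs ! q \<in> nodes" using rs(2) q nth_mem by fastforce
    then obtain r where r: "r \<in> V" "rs ! q = rk r" by (auto simp: nodes_def)
    have "y \<in> frontier E V rk r" using y_guard r guard_rank by simp
    then have "y \<in> V" "rk r < rk y" by (auto simp: frontier_def)
    obtain u where u: "u \<in> V" "y \<in> low_reach E V rk u" "rk u \<in> ?C"
      using root_reachingE[OF \<open>y \<in> V\<close>] .
    have "rk y \<le> rk u" using low_reach_subset_sublevel[OF u(1)] u(2) by (auto simp: sublevel_def)
    show "y \<in> (\<Union>p < q. Wsucc nodes node_arcs bag (rs ! p))"
    proof (rule mem_UN_nth_before[OF rs(3) q])
      show "rk u \<in> set rs" using u(3) rs(2) by simp
      show "rs ! q < rk u" using r(2) \<open>rk r < rk y\<close> \<open>rk y \<le> rk u\<close> by simp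
      show "y \<in> Wsucc nodes node_arcs bag (rk u)" using Wsucc_rank[OF u(1)] u(2) by simp
    qed
  qed
  with rs(1,2) show ?thesis by blast
qed

lemma kelly_decomposition: "kelly_decomposition V E nodes node_arcs bag guard"
  unfolding kelly_decomposition_def
proof (intro conjI)
  show "finite nodes" using finite_V by (simp add: nodes_def)
  show "node_arcs \<subseteq> nodes \<times> nodes" by (rule node_arcs_subset_nodes)
  show "acyclic node_arcs" by (rule acyclic_node_arcs)
  show "\<forall>i \<in> nodes. bag i \<subseteq> V \<and> guard i \<subseteq> V"
    by (auto simp: bag_def guard_def frontier_def)
  show "(\<Union>i \<in> nodes. bag i) = V" by (auto simp: nodes_def bag_def)
  show "\<forall>i \<in> nodes. \<forall>j \<in> nodes. i \<noteq> j \<longrightarrow> bag i \<inter> bag j = {}" by (auto simp: bag_def)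
  show "\<forall>i \<in> nodes. guards E (guard i) (Wsucc nodes node_arcs bag i)"
  proof
    fix i assume "i \<in> nodes"
    then obtain v where "v \<in> V" "i = rk v" by (auto simp: nodes_def)
    then show "guards E (guard i) (Wsucc nodes node_arcs bag i)"
      using guards_low_reach[OF arcs_in_V] by (simp add: guard_rank Wsucc_rank)
  qed
  show "\<forall>i \<in> nodes. \<exists>js. distinct js \<and> set js = {j. (i, j) \<in> node_arcs} \<and>
      (\<forall>q < length js. guard (js ! q) \<subseteq> bag i \<union> guard i \<union> (\<Union>p < q. Wsucc nodes node_arcs bag (js ! p)))"
    using children_enumeration by blast
  show "\<exists>rs. distinct rs \<and> set rs = {r \<in> nodes. \<forall>i. (i, r) \<notin> node_arcs} \<and>
      (\<forall>q < length rs. guard (rs ! q) \<subseteq> (\<Union>p < q. Wsucc nodes node_arcs bag (rs ! p)))"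
    by (rule roots_enumeration)
qed

lemma kelly_width_le:
  assumes "\<And>v. v \<in> V \<Longrightarrow> card (frontier E V rk v) \<le> m"
  shows "kelly_width_of nodes bag guard \<le> m + 1"
proof -
  have "card (bag i \<union> guard i) \<le> m + 1" if "i \<in> nodes" for i
  proof -
    obtain v where v: "v \<in> V" "i = rk v" using \<open>i \<in> nodes\<close> by (auto simp: nodes_def)
    have "finite (frontier E V rk v)" using finite_V by (simp add: frontier_def)
    then have "card (insert v (frontier E V rk v)) \<le> m + 1"
      using assms[OF v(1)] by (simp add: card_insert_if)
    then show ?thesis using v by (simp add: bag_rank guard_rank)
  qed
  moreover have "finite nodes" using finite_V by (simp add: nodes_def)
  ultimately show ?thesis by (simp add: kelly_width_of_def)
qed

lemma kw_le:
  assumes "\<And>v. v \<in> V \<Longrightarrow> card (frontier E V rk v) \<le> m"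
  shows "kw V E \<le> m + 1"
proof -
  have "kw V E \<le> kelly_width_of nodes bag guard"
    unfolding kw_def using kelly_decomposition by (intro Least_le) blast
  also have "\<dots> \<le> m + 1" using assms by (rule kelly_width_le)
  finally show ?thesis .
qed

end

theorem mainTheorem3:
  fixes V :: "'a set" and E :: "('a \<times> 'a) set"
  assumes "simple_digraph V E"
  shows "kw V E \<le> circ V E + 1"
proof -
  have V: "finite V" "E \<subseteq> V \<times> V" using assms by (simp_all add: simple_digraph_def)
  moreover have "V \<subseteq> (Restr E V)\<^sup>* `` V" by blast
  ultimately obtain rk where rk: "dfs_ranking E V V rk" using dfs_ranking_exists by blast
  then interpret ranked_digraph V E rk
    using V by unfold_locales (simp_all add: dfs_ranking_def)
  show ?thesis
  proof (rule kw_le)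
    fix v assume "v \<in> V"
    with rk obtain p where "frontier_path E V rk v p" by (auto simp: dfs_ranking_def)
    with V(1) inj_rk \<open>v \<in> V\<close> show "card (frontier E V rk v) \<le> circ V E"
      by (rule frontier_card_le_circ)
  qed
qed

end
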